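(* Let $N_0,N_1\ge 0$ with $N_0+N_1=N$. The square matrix $M=M(N_0,N_1)$, with rows and columns indexed by the words of length $N$ having $N_0$ zeros and $N_1$ ones, with entry $M_{w,w'}=q^{g(w,w')}$ if $w'$ is feasible for $w$ and $M_{w,w'}=0$ otherwise ($q$ an indeterminate), is invertible.
   Context: A link pattern on a finite totally ordered set is a partition into pairs that are pairwise noncrossing (no $i<j<k<\ell$ with $\{i,k\}$ and $\{j,\ell\}$ both pairs). An extended link pattern $\pi$ on $\{1,\dots,N\}$ consists of integers $\ell_1<\dots<\ell_a$ (left points) and $r_1<\dots<r_b\le N$ (right points), with every left point smaller than every right point, together with a link pattern on each maximal interval of integers of $\{1,\dots,N\}$ containing no left or right point. Its word $\mathbf w(\pi)\in\{0,1\}^N$ has $w_{\ell_k}=1$, $w_{r_k}=0$, and for each pair $\{i<j\}$ of the link patterns $w_i=0$, $w_j=1$; $\mathbf w$ is a bijection onto $\{0,1\}^N$. A directed extended link pattern is an extended link pattern in which, in each pair of the link patterns, one element is declared the source and the other the sink; left points are sinks and right points are sources. $RL$ of it is the number of pairs whose larger element is the source. Its source-sink word $w$ has $w_i=0$ iff $i$ is a source. A word $w'$ is feasible for $w$ if there exists a directed extended link pattern whose underlying extended link pattern is $\mathbf w^{-1}(w')$ and whose source-sink word is $w$; this directed pattern is then unique and $g(w,w')$ is its $RL$. *)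

theory Defs
  imports "HOL-Computational_Algebra.Polynomial"
begin

(* Positions are 0,...,N-1 (the paper uses 1,...,N). A pair {i<j} is stored as (i,j). *)

definition noncrossing :: "(nat \<times> nat) set \<Rightarrow> bool" where
  "noncrossing P \<longleftrightarrow>
     (\<forall>(i,k)\<in>P. \<forall>(j,l)\<in>P. \<not> (i < j \<and> j < k \<and> k < l))"

(* extended link pattern on {0..<N}: left points L, right points R, pairs P *)
definition ext_link_pattern :: "nat \<Rightarrow> nat set \<Rightarrow> nat set \<Rightarrow> (nat \<times> nat) set \<Rightarrow> bool" where
  "ext_link_pattern N L R P \<longleftrightarrow>
     L \<subseteq> {..<N} \<and> R \<subseteq> {..<N} \<and>
     (\<forall>l\<in>L. \<forall>r\<in>R. l < r) \<and>
     (\<forall>(i,j)\<in>P. i < j \<and> j < N \<and> i \<notin> L \<union> R \<and> j \<notin> L \<union> R) \<and>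
     (\<forall>x\<in>{..<N} - (L \<union> R). \<exists>!p. p \<in> P \<and> (x = fst p \<or> x = snd p)) \<and>
     noncrossing P \<and>
     (\<forall>(i,j)\<in>P. \<forall>x\<in>L \<union> R. \<not> (i < x \<and> x < j))"

definition elp_word :: "nat \<Rightarrow> nat set \<Rightarrow> nat set \<Rightarrow> (nat \<times> nat) set \<Rightarrow> nat list" where
  "elp_word N L R P = map (\<lambda>i. if i \<in> L then 1 else if i \<in> R then 0
                              else if (\<exists>j. (i,j) \<in> P) then 0 else 1) [0..<N]"

(* A directed extended link pattern is (L,R,P,S) with S \<subseteq> P the set of pairs whose
   larger element is the source (in pairs of P - S the smaller element is the source).
   Its RL is card S. Source-sink word: entry 0 iff the position is a source. *)
definition ss_word :: "nat \<Rightarrow> nat set \<Rightarrow> nat set \<Rightarrow> (nat \<times> nat) set \<Rightarrow> (nat \<times> nat) set \<Rightarrow> nat list" where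
  "ss_word N L R P S = map (\<lambda>i. if i \<in> R \<or> (\<exists>j. (i,j) \<in> P - S) \<or> (\<exists>j. (j,i) \<in> S)
                               then 0 else 1) [0..<N]"

definition feasible :: "nat \<Rightarrow> nat list \<Rightarrow> nat list \<Rightarrow> bool" where
  "feasible N w w' \<longleftrightarrow>
     (\<exists>L R P S. ext_link_pattern N L R P \<and> S \<subseteq> P \<and>
                elp_word N L R P = w' \<and> ss_word N L R P S = w)"

definition g :: "nat \<Rightarrow> nat list \<Rightarrow> nat list \<Rightarrow> nat" where
  "g N w w' = (THE k. \<exists>L R P S. ext_link_pattern N L R P \<and> S \<subseteq> P \<and>
                elp_word N L R P = w' \<and> ss_word N L R P S = w \<and> card S = k)"

definition words :: "nat \<Rightarrow> nat \<Rightarrow> nat list set" where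
  "words N0 N1 = {w. length w = N0 + N1 \<and> set w \<subseteq> {0,1} \<and>
                     length (filter (\<lambda>x. x = 0) w) = N0}"

definition M :: "nat \<Rightarrow> nat \<Rightarrow> nat list \<Rightarrow> nat list \<Rightarrow> int poly" where
  "M N0 N1 w w' = (if feasible (N0 + N1) w w' then [:0, 1:] ^ g (N0 + N1) w w' else 0)"

definition invertible_on :: "'i set \<Rightarrow> ('i \<Rightarrow> 'i \<Rightarrow> 'a::comm_ring_1) \<Rightarrow> bool" where
  "invertible_on I A \<longleftrightarrow>
     (\<exists>B. (\<forall>x\<in>I. \<forall>y\<in>I. (\<Sum>z\<in>I. A x z * B z y) = (if x = y then 1 else 0)) \<and>
          (\<forall>x\<in>I. \<forall>y\<in>I. (\<Sum>z\<in>I. B x z * A z y) = (if x = y then 1 else 0)))"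

end

theory Submission
  imports Defs "HOL-Library.List_Lexorder"
begin

(* The matrix is unitriangular for the lexicographic order on words. Let a directed pattern have
   underlying word w' and source-sink word w, and let S be its set of pairs oriented from the larger
   to the smaller element. The two words agree away from the ends of the pairs in S; at the smallest
   such end w' has a 0 and w a 1. Hence w' < w when S is nonempty and w' = w when S is empty, so
   feasible entries lie on or below the diagonal, and on the diagonal RL = 0 gives the entry q^0 = 1.
   Every word is feasible for itself because every word is the word of an extended link pattern. *)

lemma invertible_on_insert_max:
  fixes A :: "'i \<Rightarrow> 'i \<Rightarrow> 'a::comm_ring_1"
  assumes inv: "invertible_on I A" and "finite I" and "m \<notin> I"
    and col: "\<And>x. x \<in> I \<Longrightarrow> A x m = 0" and "A m m = 1"
  shows "invertible_on (insert m I) A"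
proof -
  obtain B where
    AB: "\<And>x y. x \<in> I \<Longrightarrow> y \<in> I \<Longrightarrow> (\<Sum>z\<in>I. A x z * B z y) = (if x = y then 1 else 0)" and
    BA: "\<And>x y. x \<in> I \<Longrightarrow> y \<in> I \<Longrightarrow> (\<Sum>z\<in>I. B x z * A z y) = (if x = y then 1 else 0)"
    using inv unfolding invertible_on_def by blast
  define c where "c y = - (\<Sum>u\<in>I. A m u * B u y)" for y
  \<comment> \<open>the block inverse of the matrix with blocks \<open>A|I\<close>, column \<open>0\<close>, row \<open>A m\<close>, corner \<open>1\<close>\<close>
  define B' where "B' x y = (if x = m then if y = m then 1 else c y
                             else if y = m then 0 else B x y)" for x y
  have sum_insert: "(\<Sum>z\<in>insert m I. f z) = f m + (\<Sum>z\<in>I. f z)" for f :: "'i \<Rightarrow> 'a"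
    using \<open>finite I\<close> \<open>m \<notin> I\<close> by simp
  have B'_m: "B' m y = (if y = m then 1 else c y)" "B' x m = (if x = m then 1 else 0)" for x y
    by (simp_all add: B'_def)
  have B'_I: "(\<Sum>z\<in>I. f z * B' z y) = (if y = m then 0 else \<Sum>z\<in>I. f z * B z y)" for f y
  proof -
    have col_B': "z \<in> I \<Longrightarrow> B' z y = (if y = m then 0 else B z y)" for z
      using \<open>m \<notin> I\<close> by (auto simp: B'_def)
    show ?thesis by (simp add: col_B' cong: sum.cong)
  qed
  have I_B': "(\<Sum>z\<in>I. B' x z * f z) = (if x = m then \<Sum>z\<in>I. c z * f z else \<Sum>z\<in>I. B x z * f z)"
    for f x
  proof -
    have row_B': "z \<in> I \<Longrightarrow> B' x z = (if x = m then c z else B x z)" for z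
      using \<open>m \<notin> I\<close> by (auto simp: B'_def)
    show ?thesis by (simp add: row_B' cong: sum.cong)
  qed
  have c_A: "(\<Sum>z\<in>I. c z * A z y) = - A m y" if "y \<in> I" for y
  proof -
    have "(\<Sum>z\<in>I. c z * A z y) = - (\<Sum>z\<in>I. \<Sum>u\<in>I. A m u * B u z * A z y)"
      unfolding c_def by (simp add: sum_distrib_right sum_negf)
    also have "\<dots> = - (\<Sum>u\<in>I. A m u * (\<Sum>z\<in>I. B u z * A z y))"
      by (subst sum.swap) (simp add: sum_distrib_left mult.assoc)
    also have "\<dots> = - A m y"
      using that \<open>finite I\<close> by (simp add: BA if_distrib cong: if_cong sum.cong)
    finally show ?thesis .
  qed
  have "(\<Sum>z\<in>insert m I. A x z * B' z y) = (if x = y then 1 else 0)"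
    if "x \<in> insert m I" "y \<in> insert m I" for x y
    using that \<open>m \<notin> I\<close> \<open>A m m = 1\<close> col AB
    by (auto simp: sum_insert B'_I B'_m c_def)
  moreover have "(\<Sum>z\<in>insert m I. B' x z * A z y) = (if x = y then 1 else 0)"
    if "x \<in> insert m I" "y \<in> insert m I" for x y
    using that \<open>m \<notin> I\<close> \<open>A m m = 1\<close> col BA c_A
    by (auto simp: sum_insert I_B' B'_m)
  ultimately show ?thesis
    unfolding invertible_on_def by blast
qed

lemma invertible_on_unitriangular:
  fixes A :: "'i::linorder \<Rightarrow> 'i \<Rightarrow> 'a::comm_ring_1"
  assumes "finite I"
    and "\<And>x. x \<in> I \<Longrightarrow> A x x = 1"
    and "\<And>x y. x \<in> I \<Longrightarrow> y \<in> I \<Longrightarrow> x < y \<Longrightarrow> A x y = 0"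
  shows "invertible_on I A"
  using assms
proof (induction I rule: finite_linorder_max_induct)
  case empty
  show ?case unfolding invertible_on_def by simp
next
  case (insert m I)
  show ?case
    by (rule invertible_on_insert_max) (use insert in auto)
qed

lemma ext_link_patternD:
  assumes "ext_link_pattern N L R P"
  shows "L \<subseteq> {..<N}" "R \<subseteq> {..<N}" "\<And>l r. l \<in> L \<Longrightarrow> r \<in> R \<Longrightarrow> l < r"
    and "\<And>i j. (i, j) \<in> P \<Longrightarrow> i < j \<and> j < N \<and> i \<notin> L \<union> R \<and> j \<notin> L \<union> R"
    and "\<And>x. x < N \<Longrightarrow> x \<notin> L \<union> R \<Longrightarrow> \<exists>!p. p \<in> P \<and> (x = fst p \<or> x = snd p)"
    and "noncrossing P"
    and "\<And>i j x. (i, j) \<in> P \<Longrightarrow> x \<in> L \<union> R \<Longrightarrow> \<not> (i < x \<and> x < j)"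
  using assms unfolding ext_link_pattern_def by (simp_all add: Ball_def) blast+

lemma ext_link_pattern_pair_eqI:
  assumes "ext_link_pattern N L R P" "(a, b) \<in> P" "(c, d) \<in> P" "c \<in> {a, b} \<or> d \<in> {a, b}"
  shows "(c, d) = (a, b)"
proof -
  note elp = ext_link_patternD[OF assms(1)]
  obtain x where x: "x \<in> {a, b}" "x \<in> {c, d}" using assms(4) by blast
  then have "x < N" "x \<notin> L \<union> R" using elp(4)[OF assms(2)] by auto
  then obtain p where p: "\<And>q. q \<in> P \<Longrightarrow> x = fst q \<or> x = snd q \<Longrightarrow> q = p"
    using elp(5) by blast
  show ?thesis using p[of "(a, b)"] p[of "(c, d)"] x assms(2,3) by auto
qed

lemma elp_word_length [simp]: "length (elp_word N L R P) = N"
  by (simp add: elp_word_def)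

lemma ss_word_length [simp]: "length (ss_word N L R P S) = N"
  by (simp add: ss_word_def)

lemma elp_word_nth:
  "k < N \<Longrightarrow> elp_word N L R P ! k =
     (if k \<in> L then 1 else if k \<in> R then 0 else if \<exists>j. (k, j) \<in> P then 0 else 1)"
  by (simp add: elp_word_def)

lemma ss_word_nth:
  "k < N \<Longrightarrow> ss_word N L R P S ! k =
     (if k \<in> R \<or> (\<exists>j. (k, j) \<in> P - S) \<or> (\<exists>j. (j, k) \<in> S) then 0 else 1)"
  by (simp add: ss_word_def)

lemma ss_word_nth_at_point:
  assumes "ext_link_pattern N L R P" "S \<subseteq> P" "k \<in> L \<union> R"
  shows "ss_word N L R P S ! k = elp_word N L R P ! k"
proof -
  note elp = ext_link_patternD[OF assms(1)]
  have "k < N" "k \<in> L \<longleftrightarrow> k \<notin> R" using assms(3) elp(1-3) by auto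
  moreover have "(k, j) \<notin> P" "(j, k) \<notin> P" for j using assms(3) elp(4) by blast+
  ultimately show ?thesis using assms(2) by (auto simp: ss_word_nth elp_word_nth)
qed

lemma elp_ss_word_nth_at_pair:
  assumes "ext_link_pattern N L R P" "S \<subseteq> P" "(a, b) \<in> P"
  shows "elp_word N L R P ! a = 0" "ss_word N L R P S ! a = (if (a, b) \<in> S then 1 else 0)"
    and "elp_word N L R P ! b = 1" "ss_word N L R P S ! b = (if (a, b) \<in> S then 0 else 1)"
proof -
  note elp = ext_link_patternD[OF assms(1)]
  have ab: "a < N" "b < N" "a \<notin> L" "a \<notin> R" "b \<notin> L" "b \<notin> R"
    using elp(4)[OF assms(3)] by auto
  have "(c, d) = (a, b)" if "(c, d) \<in> P" "c \<in> {a, b} \<or> d \<in> {a, b}" for c d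
    using ext_link_pattern_pair_eqI[OF assms(1,3) that] .
  then have "(a, j) \<in> P \<longleftrightarrow> j = b" "(j, b) \<in> P \<longleftrightarrow> j = a" "(j, a) \<notin> P" "(b, j) \<notin> P" for j
    using assms(3) elp(4)[OF assms(3)] by auto
  then show "elp_word N L R P ! a = 0" "ss_word N L R P S ! a = (if (a, b) \<in> S then 1 else 0)"
    "elp_word N L R P ! b = 1" "ss_word N L R P S ! b = (if (a, b) \<in> S then 0 else 1)"
    using ab assms(2) by (auto simp: elp_word_nth ss_word_nth)
qed

lemma ss_word_nth_eq_elp_word_nth:
  assumes "ext_link_pattern N L R P" "S \<subseteq> P" "k < N"
    and untouched: "\<And>a b. (a, b) \<in> S \<Longrightarrow> k \<noteq> a \<and> k \<noteq> b"
  shows "ss_word N L R P S ! k = elp_word N L R P ! k"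
proof (cases "k \<in> L \<union> R")
  case True
  then show ?thesis using ss_word_nth_at_point[OF assms(1,2)] by blast
next
  case False
  then obtain a b where ab: "(a, b) \<in> P" "k = a \<or> k = b"
    using ext_link_patternD(5)[OF assms(1) \<open>k < N\<close>] by (metis prod.collapse)
  then have "(a, b) \<notin> S" using untouched by blast
  then show ?thesis using ab elp_ss_word_nth_at_pair[OF assms(1,2) ab(1)] by auto
qed

lemma elp_word_less_ss_word:
  assumes "ext_link_pattern N L R P" "S \<subseteq> P" "S \<noteq> {}"
  shows "elp_word N L R P < ss_word N L R P S"
proof -
  define i where "i = (LEAST a. \<exists>b. (a, b) \<in> S)"
  obtain j where ij: "(i, j) \<in> S"
    using assms(3) LeastI_ex[of "\<lambda>a. \<exists>b. (a, b) \<in> S"] unfolding i_def by auto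
  have i_min: "i \<le> a" if "(a, b) \<in> S" for a b
    using that Least_le[of "\<lambda>a. \<exists>b. (a, b) \<in> S"] unfolding i_def by blast
  have lt: "a < b" "b < N" if "(a, b) \<in> S" for a b
    using that assms(2) ext_link_patternD(4)[OF assms(1)] by blast+
  have "take i (elp_word N L R P) = take i (ss_word N L R P S)"
  proof (rule nth_equalityI)
    fix t assume "t < length (take i (elp_word N L R P))"
    then have "t < i" "i < N" using lt[OF ij] by auto
    moreover have "t \<noteq> a \<and> t \<noteq> b" if "(a, b) \<in> S" for a b
      using i_min[OF that] lt(1)[OF that] \<open>t < i\<close> by linarith
    ultimately show "take i (elp_word N L R P) ! t = take i (ss_word N L R P S) ! t"
      using ss_word_nth_eq_elp_word_nth[OF assms(1,2)] by simp
  qed simp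
  moreover have "elp_word N L R P ! i < ss_word N L R P S ! i"
    using ij assms(2) elp_ss_word_nth_at_pair[OF assms(1,2)] by auto
  ultimately show ?thesis
    using lt[OF ij] unfolding list_less_def lexord_take_index_conv by (auto intro!: exI[of _ i])
qed

lemma ss_word_eq_elp_word_iff:
  assumes "ext_link_pattern N L R P" "S \<subseteq> P"
  shows "ss_word N L R P S = elp_word N L R P \<longleftrightarrow> S = {}"
proof
  show "ss_word N L R P S = elp_word N L R P \<Longrightarrow> S = {}"
    using elp_word_less_ss_word[OF assms] by auto
  show "S = {} \<Longrightarrow> ss_word N L R P S = elp_word N L R P"
    using ss_word_nth_eq_elp_word_nth[OF assms] by (auto intro: nth_equalityI)
qed

lemma feasible_le:
  assumes "feasible N w w'"
  shows "w' \<le> w"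
proof -
  obtain L R P S where "ext_link_pattern N L R P" "S \<subseteq> P"
    and "elp_word N L R P = w'" "ss_word N L R P S = w"
    using assms unfolding feasible_def by blast
  then show ?thesis
    using elp_word_less_ss_word ss_word_eq_elp_word_iff by (metis order.order_iff_strict)
qed

lemma g_self:
  assumes "feasible N w w"
  shows "g N w w = 0"
  unfolding g_def
proof (rule the_equality)
  show "\<exists>L R P S. ext_link_pattern N L R P \<and> S \<subseteq> P \<and>
          elp_word N L R P = w \<and> ss_word N L R P S = w \<and> card S = 0"
    using assms unfolding feasible_def by (metis card.empty ss_word_eq_elp_word_iff)
  show "k = 0" if "\<exists>L R P S. ext_link_pattern N L R P \<and> S \<subseteq> P \<and>
          elp_word N L R P = w \<and> ss_word N L R P S = w \<and> card S = k" for k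
    using that ss_word_eq_elp_word_iff by fastforce
qed

lemma noncrossing_insert:
  assumes "noncrossing P" "\<forall>(i, k)\<in>P. k < b" "\<forall>(i, k)\<in>P. \<not> (i < a \<and> a < k)"
  shows "noncrossing (insert (a, b) P)"
  using assms unfolding noncrossing_def by fastforce

lemma ext_link_pattern_insert_right:
  assumes "ext_link_pattern N L R P"
  shows "ext_link_pattern (Suc N) L (insert N R) P"
proof -
  note elp = ext_link_patternD[OF assms]
  show ?thesis unfolding ext_link_pattern_def
  proof (intro conjI)
    show "\<forall>x\<in>{..<Suc N} - (L \<union> insert N R). \<exists>!p. p \<in> P \<and> (x = fst p \<or> x = snd p)"
      using elp(5) by auto
    show "\<forall>(i, j)\<in>P. \<forall>x\<in>L \<union> insert N R. \<not> (i < x \<and> x < j)"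
      using elp(4,7) by fastforce
  qed (use elp(1-3,6) in \<open>auto dest: elp(4)\<close>)
qed

lemma ext_link_pattern_insert_left:
  assumes "ext_link_pattern N L {} P"
  shows "ext_link_pattern (Suc N) (insert N L) {} P"
proof -
  note elp = ext_link_patternD[OF assms]
  show ?thesis unfolding ext_link_pattern_def
  proof (intro conjI)
    show "\<forall>x\<in>{..<Suc N} - (insert N L \<union> {}). \<exists>!p. p \<in> P \<and> (x = fst p \<or> x = snd p)"
      using elp(5) by auto
    show "\<forall>(i, j)\<in>P. \<forall>x\<in>insert N L \<union> {}. \<not> (i < x \<and> x < j)"
      using elp(4,7) by fastforce
  qed (use elp(1-3,6) in \<open>auto dest: elp(4)\<close>)
qed

lemma ext_link_pattern_close_max_right:
  assumes "ext_link_pattern N L R P" "R \<noteq> {}" "r = Max R"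
  shows "ext_link_pattern (Suc N) L (R - {r}) (insert (r, N) P)"
proof -
  note elp = ext_link_patternD[OF assms(1)]
  have "finite R" using elp(2) finite_subset by blast
  then have r: "r \<in> R" "\<forall>x\<in>R. x \<le> r" using assms(2,3) by auto
  then have "r < N" "r \<notin> L" using elp(2,3) by auto
  have avoid: "i \<noteq> r \<and> i \<noteq> N \<and> j \<noteq> r \<and> j \<noteq> N" if "(i, j) \<in> P" for i j
    using elp(4)[OF that] r(1) by auto
  show ?thesis unfolding ext_link_pattern_def
  proof (intro conjI)
    show "\<forall>x\<in>{..<Suc N} - (L \<union> (R - {r})).
            \<exists>!p. p \<in> insert (r, N) P \<and> (x = fst p \<or> x = snd p)"
    proof
      fix x assume x: "x \<in> {..<Suc N} - (L \<union> (R - {r}))"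
      show "\<exists>!p. p \<in> insert (r, N) P \<and> (x = fst p \<or> x = snd p)"
      proof (cases "x \<in> {r, N}")
        case True
        then show ?thesis using avoid by fastforce
      next
        case False
        then have "x < N" "x \<notin> L \<union> R" using x by auto
        then obtain p where p: "p \<in> P" "x = fst p \<or> x = snd p"
          and unique: "\<And>q. q \<in> P \<Longrightarrow> x = fst q \<or> x = snd q \<Longrightarrow> q = p"
          using elp(5) by blast
        show ?thesis
        proof (rule ex1I[of _ p])
          show "p \<in> insert (r, N) P \<and> (x = fst p \<or> x = snd p)" using p by blast
          fix q assume q: "q \<in> insert (r, N) P \<and> (x = fst q \<or> x = snd q)"
          then have "q \<noteq> (r, N)" using False by auto
          then show "q = p" using q unique by blast
        qed
      qed
    qed
    show "noncrossing (insert (r, N) P)"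
      by (rule noncrossing_insert) (use elp(4,6,7) r(1) in auto)
    show "\<forall>(i, j)\<in>insert (r, N) P. \<forall>x\<in>L \<union> (R - {r}). \<not> (i < x \<and> x < j)"
      using elp(3,7) r by fastforce
  qed (use elp(1-3) \<open>r < N\<close> \<open>r \<notin> L\<close> in \<open>auto dest: elp(4)\<close>)
qed

lemma elp_word_Suc:
  "elp_word (Suc N) L R P = elp_word N L R P @
     [if N \<in> L then 1 else if N \<in> R then 0 else if \<exists>j. (N, j) \<in> P then 0 else 1]"
  by (simp add: elp_word_def)

text \<open>Reading the word from left to right, a 0 opens a right point and a 1 closes the last
  open right point, or becomes a left point if none is open.\<close>

lemma elp_word_surj:
  "set w \<subseteq> {0, 1} \<Longrightarrow> \<exists>L R P. ext_link_pattern (length w) L R P \<and> elp_word (length w) L R P = w"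
proof (induction w rule: rev_induct)
  case Nil
  have "ext_link_pattern 0 {} {} {}" unfolding ext_link_pattern_def noncrossing_def by simp
  then show ?case by (auto simp: elp_word_def)
next
  case (snoc c w)
  define N where "N = length w"
  obtain L R P where elp: "ext_link_pattern N L R P" and w: "elp_word N L R P = w"
    using snoc N_def by auto
  note elpD = ext_link_patternD[OF elp]
  have N_free: "N \<notin> L" "N \<notin> R" "(N, j) \<notin> P" for j
    using elpD(1,2) elpD(4)[of N j] by auto
  consider "c = 0" | "c = 1" "R = {}" | "c = 1" "R \<noteq> {}" using snoc.prems by auto
  then have "\<exists>L R P. ext_link_pattern (Suc N) L R P \<and> elp_word (Suc N) L R P = w @ [c]"
  proof cases
    case 1
    have "elp_word N L (insert N R) P = w"
      using w by (auto simp: elp_word_def intro!: map_cong)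
    then have "elp_word (Suc N) L (insert N R) P = w @ [c]"
      using 1 N_free by (simp add: elp_word_Suc)
    then show ?thesis using ext_link_pattern_insert_right[OF elp] by blast
  next
    case 2
    have "elp_word N (insert N L) R P = w"
      using w by (auto simp: elp_word_def intro!: map_cong)
    then have "elp_word (Suc N) (insert N L) R P = w @ [c]"
      using 2 N_free by (simp add: elp_word_Suc)
    then show ?thesis using ext_link_pattern_insert_left elp unfolding 2(2) by blast
  next
    case 3
    define r where "r = Max R"
    have "finite R" using elpD(2) finite_subset by blast
    then have "r \<in> R" using 3(2) by (simp add: r_def)
    then have "r < N" "r \<notin> L" using elpD(2) elpD(3)[of r r] by auto
    have "elp_word N L (R - {r}) (insert (r, N) P) = w"
      using w \<open>r \<in> R\<close> \<open>r \<notin> L\<close> by (auto simp: elp_word_def intro!: map_cong)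
    then have "elp_word (Suc N) L (R - {r}) (insert (r, N) P) = w @ [c]"
      using 3(1) N_free \<open>r < N\<close> by (simp add: elp_word_Suc)
    then show ?thesis using ext_link_pattern_close_max_right[OF elp 3(2) r_def] by blast
  qed
  then show ?case by (simp add: N_def)
qed

lemma feasible_self:
  assumes "set w \<subseteq> {0, 1}"
  shows "feasible (length w) w w"
proof -
  obtain L R P where elp: "ext_link_pattern (length w) L R P"
    and word: "elp_word (length w) L R P = w"
    using elp_word_surj[OF assms] by blast
  have "ss_word (length w) L R P {} = w"
    using ss_word_eq_elp_word_iff[OF elp empty_subsetI] word by simp
  then show ?thesis
    unfolding feasible_def using elp word
    by (intro exI[of _ L] exI[of _ R] exI[of _ P] exI[of _ "{}"]) simp
qed

lemma finite_words: "finite (words N0 N1)"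
proof (rule finite_subset)
  show "words N0 N1 \<subseteq> {w. set w \<subseteq> {0, 1} \<and> length w = N0 + N1}"
    unfolding words_def by auto
  show "finite {w. set w \<subseteq> {0::nat, 1} \<and> length w = N0 + N1}"
    by (rule finite_lists_length_eq) simp
qed

theorem proposition2p8:
  fixes N0 N1 :: nat
  shows "invertible_on (words N0 N1) (M N0 N1)"
proof (rule invertible_on_unitriangular)
  show "finite (words N0 N1)" by (rule finite_words)
  show "M N0 N1 w w = 1" if "w \<in> words N0 N1" for w
  proof -
    have "feasible (N0 + N1) w w"
      using that feasible_self unfolding words_def by fastforce
    then show ?thesis by (simp add: M_def g_self)
  qed
  show "M N0 N1 w w' = 0" if "w < w'" for w w'
  proof -
    have "\<not> feasible (N0 + N1) w w'" using that feasible_le leD by blast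
    then show ?thesis by (simp add: M_def)
  qed
qed

end
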